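(* Let $p$ be a prime, $a\in\mathbb{Q}_p$, and $f:\mathbb{Q}_p\to\mathbb{Q}_p$, $f(x)=x^3+ax^2$. Let $x^{(0)}\in\mathbb{Q}_p$ be a fixed point of $f$. If $x\in\mathbb{Q}_p$ satisfies $$\max\Big\{|3x^{(0)}+a|_p\,|x-x^{(0)}|_p,\ |x-x^{(0)}|_p^2\Big\}<|f'(x^{(0)})|_p,$$ then $$|f(x)-f(x^{(0)})|_p=|f'(x^{(0)})|_p\,|x-x^{(0)}|_p.$$
   Context: $\mathbb{Q}_p$ is the field of $p$-adic numbers with $p$-adic norm $|\cdot|_p$; $f'(x)=3x^2+2ax$ is the derivative of $f$. *)

theory Defs
  imports Complex_Main "HOL-Computational_Algebra.Primes"
begin

definition padic_val_rat :: "nat \<Rightarrow> rat \<Rightarrow> int" where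
  "padic_val_rat p r = (if r = 0 then 0 else
     (case quotient_of r of (n, d) \<Rightarrow>
        int (multiplicity (int p) n) - int (multiplicity (int p) d)))"

definition padic_abs_rat :: "nat \<Rightarrow> rat \<Rightarrow> real" where
  "padic_abs_rat p r = (if r = 0 then 0 else real p powr (- real_of_int (padic_val_rat p r)))"

definition padic_cauchy :: "nat \<Rightarrow> (nat \<Rightarrow> rat) \<Rightarrow> bool" where
  "padic_cauchy p X \<longleftrightarrow>
     (\<forall>e>0. \<exists>N. \<forall>m\<ge>N. \<forall>n\<ge>N. padic_abs_rat p (X m - X n) < e)"

definition padic_null :: "nat \<Rightarrow> (nat \<Rightarrow> rat) \<Rightarrow> bool" where
  "padic_null p X \<longleftrightarrow> (\<lambda>n. padic_abs_rat p (X n)) \<longlonglongrightarrow> 0"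

definition padic_class :: "nat \<Rightarrow> (nat \<Rightarrow> rat) \<Rightarrow> (nat \<Rightarrow> rat) set" where
  "padic_class p X = {Y. padic_cauchy p Y \<and> padic_null p (\<lambda>n. X n - Y n)}"

definition Qp :: "nat \<Rightarrow> (nat \<Rightarrow> rat) set set" where
  "Qp p = padic_class p ` {X. padic_cauchy p X}"

definition padic_rep :: "(nat \<Rightarrow> rat) set \<Rightarrow> nat \<Rightarrow> rat" where
  "padic_rep A = (SOME X. X \<in> A)"

definition padic_add :: "nat \<Rightarrow> (nat \<Rightarrow> rat) set \<Rightarrow> (nat \<Rightarrow> rat) set \<Rightarrow> (nat \<Rightarrow> rat) set" where
  "padic_add p A B = padic_class p (\<lambda>n. padic_rep A n + padic_rep B n)"

definition padic_sub :: "nat \<Rightarrow> (nat \<Rightarrow> rat) set \<Rightarrow> (nat \<Rightarrow> rat) set \<Rightarrow> (nat \<Rightarrow> rat) set" where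
  "padic_sub p A B = padic_class p (\<lambda>n. padic_rep A n - padic_rep B n)"

definition padic_mult :: "nat \<Rightarrow> (nat \<Rightarrow> rat) set \<Rightarrow> (nat \<Rightarrow> rat) set \<Rightarrow> (nat \<Rightarrow> rat) set" where
  "padic_mult p A B = padic_class p (\<lambda>n. padic_rep A n * padic_rep B n)"

definition padic_of_rat :: "nat \<Rightarrow> rat \<Rightarrow> (nat \<Rightarrow> rat) set" where
  "padic_of_rat p r = padic_class p (\<lambda>_. r)"

definition padic_norm :: "nat \<Rightarrow> (nat \<Rightarrow> rat) set \<Rightarrow> real" where
  "padic_norm p A = lim (\<lambda>n. padic_abs_rat p (padic_rep A n))"

definition cubic_f :: "nat \<Rightarrow> (nat \<Rightarrow> rat) set \<Rightarrow> (nat \<Rightarrow> rat) set \<Rightarrow> (nat \<Rightarrow> rat) set" where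
  "cubic_f p a x = padic_add p (padic_mult p x (padic_mult p x x)) (padic_mult p a (padic_mult p x x))"

definition cubic_f' :: "nat \<Rightarrow> (nat \<Rightarrow> rat) set \<Rightarrow> (nat \<Rightarrow> rat) set \<Rightarrow> (nat \<Rightarrow> rat) set" where
  "cubic_f' p a x = padic_add p (padic_mult p (padic_of_rat p 3) (padic_mult p x x))
                                (padic_mult p (padic_of_rat p 2) (padic_mult p a x))"

end

theory Submission
  imports Defs
begin

(* With h = x - x0 one has the exact factorisation
     f(x) - f(x0) = h * (f'(x0) + (3 x0 + a) h + h^2).
   The hypothesis says that both correction terms are strictly smaller than f'(x0) in norm, so in
   the ultrametric field Q_p the bracket has norm |f'(x0)|_p, and multiplicativity of the norm gives
   the claim.  For Q_p built as Cauchy sequences modulo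
   null sequences, multiplicativity and the strict ultrametric property of the norm pass from
   |.|_p on Q to the limit along representatives. *)

lemma padic_val_rat_of_int_div:
  assumes "prime p" "n \<noteq> 0" "d \<noteq> 0"
  shows "padic_val_rat p (of_int n / of_int d)
           = int (multiplicity (int p) n) - int (multiplicity (int p) d)"
proof -
  let ?r = "of_int n / of_int d :: rat" and ?m = "multiplicity (int p)"
  obtain n' d' where q: "quotient_of ?r = (n', d')" by (cases "quotient_of ?r")
  have d': "d' > 0" and r: "?r = of_int n' / of_int d'"
    using quotient_of_denom_pos[OF q] quotient_of_div[OF q] by auto
  have n': "n' \<noteq> 0" using r assms by auto
  have "(of_int (n * d') :: rat) = of_int (n' * d)" using r assms d' by (simp add: field_simps)
  hence "?m (n * d') = ?m (n' * d)" by (simp only: of_int_eq_iff)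
  moreover have "prime_elem (int p)" using assms(1) by (simp add: prime_imp_prime_elem)
  ultimately have "?m n + ?m d' = ?m n' + ?m d"
    using assms d' n' by (simp add: prime_elem_multiplicity_mult_distrib)
  thus ?thesis using q assms by (simp add: padic_val_rat_def)
qed

lemma padic_val_rat_mult:
  assumes "prime p" "r \<noteq> 0" "s \<noteq> 0"
  shows "padic_val_rat p (r * s) = padic_val_rat p r + padic_val_rat p s"
proof -
  obtain n1 d1 where r: "quotient_of r = (n1, d1)" by (cases "quotient_of r")
  obtain n2 d2 where s: "quotient_of s = (n2, d2)" by (cases "quotient_of s")
  let ?m = "multiplicity (int p)" and ?v = "padic_val_rat p"
  have d: "d1 > 0" "d2 > 0" using r s by (simp_all add: quotient_of_denom_pos)
  have rs: "r = of_int n1 / of_int d1" "s = of_int n2 / of_int d2"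
    using r s by (simp_all add: quotient_of_div)
  hence n: "n1 \<noteq> 0" "n2 \<noteq> 0" using assms by auto
  have "?v (r * s) = int (?m (n1 * n2)) - int (?m (d1 * d2))"
    using padic_val_rat_of_int_div[OF assms(1), of "n1 * n2" "d1 * d2"] n d by (simp add: rs)
  moreover have "?v r = int (?m n1) - int (?m d1)" "?v s = int (?m n2) - int (?m d2)"
    using n d by (simp_all add: rs padic_val_rat_of_int_div[OF assms(1)])
  moreover have "prime_elem (int p)" using assms(1) by (simp add: prime_imp_prime_elem)
  ultimately show ?thesis using n d by (simp add: prime_elem_multiplicity_mult_distrib)
qed

lemma multiplicity_add_ge:
  fixes a b :: "'a :: factorial_semiring"
  assumes "prime_elem q" "k \<le> multiplicity q a" "k \<le> multiplicity q b" "a + b \<noteq> 0"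
  shows "k \<le> multiplicity q (a + b)"
proof (rule multiplicity_geI)
  show "q ^ k dvd a + b" using assms multiplicity_dvd' by (metis dvd_add)
  show "\<not> is_unit q" using assms(1) prime_elem_not_unit by blast
qed (use assms in auto)

lemma padic_val_rat_add_ge:
  assumes "prime p" "r \<noteq> 0" "s \<noteq> 0" "r + s \<noteq> 0"
  shows "min (padic_val_rat p r) (padic_val_rat p s) \<le> padic_val_rat p (r + s)"
proof -
  obtain n1 d1 where r: "quotient_of r = (n1, d1)" by (cases "quotient_of r")
  obtain n2 d2 where s: "quotient_of s = (n2, d2)" by (cases "quotient_of s")
  let ?m = "multiplicity (int p)" and ?d = "d1 * d2"
  have d: "?d \<noteq> 0" using r s quotient_of_denom_pos by fastforce
  have rs: "r = of_int n1 / of_int d1" "s = of_int n2 / of_int d2"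
    using r s by (simp_all add: quotient_of_div)
  have r': "r = of_int (n1 * d2) / of_int ?d" and s': "s = of_int (n2 * d1) / of_int ?d"
    and sum: "r + s = of_int (n1 * d2 + n2 * d1) / of_int ?d"
    using rs d by (simp_all add: field_simps)
  have n: "n1 * d2 \<noteq> 0" "n2 * d1 \<noteq> 0"
    using rs d assms(2,3) by auto
  have n_sum: "n1 * d2 + n2 * d1 \<noteq> 0"
    using sum assms(4) by (metis div_0 of_int_0)
  have v: "padic_val_rat p (of_int k / of_int ?d) = int (?m k) - int (?m ?d)" if "k \<noteq> 0" for k
    using padic_val_rat_of_int_div[OF assms(1) that d] .
  have "padic_val_rat p r = int (?m (n1 * d2)) - int (?m ?d)"
    "padic_val_rat p s = int (?m (n2 * d1)) - int (?m ?d)"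
    unfolding r' s' by (intro v n)+
  moreover have "padic_val_rat p (r + s) = int (?m (n1 * d2 + n2 * d1)) - int (?m ?d)"
    unfolding sum by (intro v n_sum)
  moreover have "min (?m (n1 * d2)) (?m (n2 * d1)) \<le> ?m (n1 * d2 + n2 * d1)"
    using assms(1) n_sum by (intro multiplicity_add_ge) (auto simp: prime_imp_prime_elem)
  ultimately show ?thesis by linarith
qed

lemma padic_abs_rat_nonneg: "padic_abs_rat p r \<ge> 0"
  by (simp add: padic_abs_rat_def)

lemma padic_abs_rat_0 [simp]: "padic_abs_rat p 0 = 0"
  by (simp add: padic_abs_rat_def)

lemma padic_abs_rat_mult:
  assumes "prime p"
  shows "padic_abs_rat p (r * s) = padic_abs_rat p r * padic_abs_rat p s"
  using padic_val_rat_mult[OF assms, of r s]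
  by (auto simp: padic_abs_rat_def powr_add[symmetric] algebra_simps)

lemma padic_abs_rat_add_le_max:
  assumes "prime p"
  shows "padic_abs_rat p (r + s) \<le> max (padic_abs_rat p r) (padic_abs_rat p s)"
proof (cases "r = 0 \<or> s = 0 \<or> r + s = 0")
  case True
  thus ?thesis using padic_abs_rat_nonneg[of p] by (auto simp: le_max_iff_disj)
next
  case False
  have "real p > 1" using assms prime_gt_1_nat by simp
  moreover have "padic_val_rat p r \<le> padic_val_rat p (r + s) \<or> padic_val_rat p s \<le> padic_val_rat p (r + s)"
    using padic_val_rat_add_ge[OF assms, of r s] False by linarith
  ultimately show ?thesis using False by (auto simp: padic_abs_rat_def max_def)
qed

lemma padic_abs_rat_uminus:
  assumes "prime p"
  shows "padic_abs_rat p (- r) = padic_abs_rat p r"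
proof (cases "r = 0")
  case False
  obtain n d where q: "quotient_of r = (n, d)" by (cases "quotient_of r")
  have d: "d > 0" and r: "r = of_int n / of_int d"
    using q by (simp_all add: quotient_of_denom_pos quotient_of_div)
  have "multiplicity (int p) (- n) = multiplicity (int p) n"
    by (metis multiplicity_normalize_right normalize_int_def abs_minus_cancel)
  thus ?thesis
    using False d padic_val_rat_of_int_div[OF assms, of "- n" d] padic_val_rat_of_int_div[OF assms, of n d]
    by (simp add: padic_abs_rat_def r)
qed simp

lemma padic_abs_rat_add_le:
  assumes "prime p"
  shows "padic_abs_rat p (r + s) \<le> padic_abs_rat p r + padic_abs_rat p s"
  using padic_abs_rat_add_le_max[OF assms, of r s] padic_abs_rat_nonneg[of p r] padic_abs_rat_nonneg[of p s]
  by linarith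

lemma padic_abs_rat_add_eq_of_less:
  assumes "prime p" "padic_abs_rat p s < padic_abs_rat p r"
  shows "padic_abs_rat p (r + s) = padic_abs_rat p r"
  using padic_abs_rat_add_le_max[OF assms(1), of "r + s" "- s"]
        padic_abs_rat_add_le_max[OF assms(1), of r s] assms
  by (auto simp: padic_abs_rat_uminus[OF assms(1)] max_def split: if_splits)

lemma padic_abs_rat_diff_abs_le:
  assumes "prime p"
  shows "\<bar>padic_abs_rat p r - padic_abs_rat p s\<bar> \<le> padic_abs_rat p (r - s)"
  using padic_abs_rat_add_le[OF assms, of "r - s" s] padic_abs_rat_add_le[OF assms, of "s - r" r]
        padic_abs_rat_uminus[OF assms, of "r - s"]
  by (simp add: abs_le_iff)

lemma padic_cauchy_iff_eventually:
  "padic_cauchy p X \<longleftrightarrow>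
     (\<forall>e>0. \<forall>\<^sub>F (m, n) in sequentially \<times>\<^sub>F sequentially. padic_abs_rat p (X m - X n) < e)"
  unfolding padic_cauchy_def eventually_prod_sequentially by fastforce

lemma padic_cauchy_convergent_abs:
  assumes "prime p" "padic_cauchy p X"
  shows "convergent (\<lambda>n. padic_abs_rat p (X n))"
proof (rule Cauchy_convergent, rule CauchyI)
  fix e :: real assume "0 < e"
  then obtain N where "\<forall>m\<ge>N. \<forall>n\<ge>N. padic_abs_rat p (X m - X n) < e"
    using assms(2) unfolding padic_cauchy_def by blast
  thus "\<exists>N. \<forall>m\<ge>N. \<forall>n\<ge>N. norm (padic_abs_rat p (X m) - padic_abs_rat p (X n)) < e"
    using padic_abs_rat_diff_abs_le[OF assms(1)] by (metis order.strict_trans1 real_norm_def)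
qed

lemma padic_cauchy_bounded:
  assumes "prime p" "padic_cauchy p X"
  obtains K where "K > 0" "\<And>n. padic_abs_rat p (X n) \<le> K"
proof -
  have "Bseq (\<lambda>n. padic_abs_rat p (X n))"
    using convergent_imp_Bseq padic_cauchy_convergent_abs[OF assms] by blast
  then obtain K where "K > 0" "\<forall>n. norm (padic_abs_rat p (X n)) \<le> K" by (auto simp: Bseq_def)
  thus ?thesis using that padic_abs_rat_nonneg by (simp add: abs_of_nonneg)
qed

lemma padic_cauchy_const: "padic_cauchy p (\<lambda>n. c)"
  by (simp add: padic_cauchy_def)

lemma padic_cauchy_add:
  assumes "prime p" "padic_cauchy p X" "padic_cauchy p Y"
  shows "padic_cauchy p (\<lambda>n. X n + Y n)"
  unfolding padic_cauchy_iff_eventually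
proof (intro allI impI)
  fix e :: real assume "e > 0"
  hence "\<forall>\<^sub>F (m, n) in sequentially \<times>\<^sub>F sequentially.
           padic_abs_rat p (X m - X n) < e \<and> padic_abs_rat p (Y m - Y n) < e"
    using assms(2,3) unfolding padic_cauchy_iff_eventually case_prod_beta
    by (intro eventually_conj) auto
  thus "\<forall>\<^sub>F (m, n) in sequentially \<times>\<^sub>F sequentially. padic_abs_rat p (X m + Y m - (X n + Y n)) < e"
  proof (rule eventually_mono, clarify)
    fix m n assume "padic_abs_rat p (X m - X n) < e" "padic_abs_rat p (Y m - Y n) < e"
    thus "padic_abs_rat p (X m + Y m - (X n + Y n)) < e"
      using padic_abs_rat_add_le_max[OF assms(1), of "X m - X n" "Y m - Y n"]
      by (simp add: algebra_simps)
  qed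
qed

lemma padic_cauchy_uminus:
  assumes "prime p" "padic_cauchy p X"
  shows "padic_cauchy p (\<lambda>n. - X n)"
  using assms(2) padic_abs_rat_uminus[OF assms(1)] unfolding padic_cauchy_def
  by (metis minus_diff_eq minus_diff_minus)

lemma padic_cauchy_diff:
  assumes "prime p" "padic_cauchy p X" "padic_cauchy p Y"
  shows "padic_cauchy p (\<lambda>n. X n - Y n)"
  using padic_cauchy_add[OF assms(1,2) padic_cauchy_uminus[OF assms(1,3)]] by simp

lemma padic_cauchy_mult:
  assumes "prime p" "padic_cauchy p X" "padic_cauchy p Y"
  shows "padic_cauchy p (\<lambda>n. X n * Y n)"
  unfolding padic_cauchy_iff_eventually
proof (intro allI impI)
  fix e :: real assume "e > 0"
  obtain K1 where "K1 > 0" "\<And>n. padic_abs_rat p (X n) \<le> K1"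
    using padic_cauchy_bounded[OF assms(1,2)] by blast
  moreover obtain K2 where "K2 > 0" "\<And>n. padic_abs_rat p (Y n) \<le> K2"
    using padic_cauchy_bounded[OF assms(1,3)] by blast
  ultimately obtain K where K: "K > 0" "\<And>n. padic_abs_rat p (X n) \<le> K" "\<And>n. padic_abs_rat p (Y n) \<le> K"
    by (metis less_max_iff_disj max.coboundedI1 max.coboundedI2)
  have "\<forall>\<^sub>F (m, n) in sequentially \<times>\<^sub>F sequentially.
          padic_abs_rat p (X m - X n) < e / K \<and> padic_abs_rat p (Y m - Y n) < e / K"
    using assms(2,3) \<open>e > 0\<close> K(1) unfolding padic_cauchy_iff_eventually case_prod_beta
    by (intro eventually_conj) auto
  thus "\<forall>\<^sub>F (m, n) in sequentially \<times>\<^sub>F sequentially. padic_abs_rat p (X m * Y m - X n * Y n) < e"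
  proof (rule eventually_mono, clarify)
    fix m n assume small: "padic_abs_rat p (X m - X n) < e / K" "padic_abs_rat p (Y m - Y n) < e / K"
    have "padic_abs_rat p (X m * (Y m - Y n)) \<le> K * padic_abs_rat p (Y m - Y n)"
      "padic_abs_rat p ((X m - X n) * Y n) \<le> K * padic_abs_rat p (X m - X n)"
      using K padic_abs_rat_nonneg[of p]
      by (simp_all add: padic_abs_rat_mult[OF assms(1)] mult_right_mono mult_left_mono mult.commute)
    moreover have "K * padic_abs_rat p (Y m - Y n) < e" "K * padic_abs_rat p (X m - X n) < e"
      using small K(1) by (simp_all add: field_simps)
    moreover have "X m * Y m - X n * Y n = X m * (Y m - Y n) + (X m - X n) * Y n"
      by (simp add: algebra_simps)
    ultimately show "padic_abs_rat p (X m * Y m - X n * Y n) < e"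
      using padic_abs_rat_add_le_max[OF assms(1), of "X m * (Y m - Y n)" "(X m - X n) * Y n"]
      by simp
  qed
qed

lemma padic_null_add:
  assumes "prime p" "padic_null p X" "padic_null p Y"
  shows "padic_null p (\<lambda>n. X n + Y n)"
  unfolding padic_null_def
proof (rule tendsto_0_le[where K = 1])
  show "(\<lambda>n. padic_abs_rat p (X n) + padic_abs_rat p (Y n)) \<longlonglongrightarrow> 0"
    using assms(2,3) unfolding padic_null_def by (rule tendsto_add_zero)
  show "\<forall>\<^sub>F n in sequentially.
          norm (padic_abs_rat p (X n + Y n)) \<le> norm (padic_abs_rat p (X n) + padic_abs_rat p (Y n)) * 1"
    using padic_abs_rat_add_le[OF assms(1)] padic_abs_rat_nonneg[of p] by simp
qed

lemma padic_null_uminus: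
  assumes "prime p" "padic_null p X"
  shows "padic_null p (\<lambda>n. - X n)"
  using assms(2) by (simp add: padic_null_def padic_abs_rat_uminus[OF assms(1)])

lemma padic_null_mult_bounded:
  assumes "prime p" "padic_null p X" "\<And>n. padic_abs_rat p (Y n) \<le> K"
  shows "padic_null p (\<lambda>n. Y n * X n)"
  unfolding padic_null_def
proof (rule tendsto_0_le[where K = K])
  show "(\<lambda>n. padic_abs_rat p (X n)) \<longlonglongrightarrow> 0"
    using assms(2) unfolding padic_null_def .
  show "\<forall>\<^sub>F n in sequentially. norm (padic_abs_rat p (Y n * X n)) \<le> norm (padic_abs_rat p (X n)) * K"
    using assms(3) padic_abs_rat_nonneg[of p]
    by (intro always_eventually allI)
      (simp add: padic_abs_rat_mult[OF assms(1)] mult.commute[of _ K] mult_right_mono)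
qed

lemma padic_class_eq:
  assumes "prime p" "padic_null p (\<lambda>n. X n - Y n)"
  shows "padic_class p X = padic_class p Y"
proof -
  have "padic_null p (\<lambda>n. X n - Z n) \<longleftrightarrow> padic_null p (\<lambda>n. Y n - Z n)" for Z
    using padic_null_add[OF assms(1) assms(2), of "\<lambda>n. Y n - Z n"]
          padic_null_add[OF assms(1) padic_null_uminus[OF assms], of "\<lambda>n. X n - Z n"]
    by auto
  thus ?thesis unfolding padic_class_def by simp
qed

lemma padic_rep_class:
  assumes "padic_cauchy p X"
  shows "padic_cauchy p (padic_rep (padic_class p X))"
    and "padic_null p (\<lambda>n. X n - padic_rep (padic_class p X) n)"
proof -
  have "X \<in> padic_class p X"
    using assms by (simp add: padic_class_def padic_null_def)
  hence "padic_rep (padic_class p X) \<in> padic_class p X"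
    unfolding padic_rep_def by (rule someI[where P = "\<lambda>Y. Y \<in> padic_class p X"])
  thus "padic_cauchy p (padic_rep (padic_class p X))"
    and "padic_null p (\<lambda>n. X n - padic_rep (padic_class p X) n)"
    by (simp_all add: padic_class_def)
qed

lemma padic_null_rep_diff:
  assumes "prime p" "padic_cauchy p X"
  shows "padic_null p (\<lambda>n. padic_rep (padic_class p X) n - X n)"
  using padic_null_uminus[OF assms(1) padic_rep_class(2)[OF assms(2)]] by simp

lemma padic_add_class:
  assumes "prime p" "padic_cauchy p X" "padic_cauchy p Y"
  shows "padic_add p (padic_class p X) (padic_class p Y) = padic_class p (\<lambda>n. X n + Y n)"
  unfolding padic_add_def
proof (rule padic_class_eq[OF assms(1)])
  let ?X = "padic_rep (padic_class p X)" and ?Y = "padic_rep (padic_class p Y)"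
  have "padic_null p (\<lambda>n. (?X n - X n) + (?Y n - Y n))"
    using assms by (intro padic_null_add padic_null_rep_diff)
  thus "padic_null p (\<lambda>n. ?X n + ?Y n - (X n + Y n))"
    by (simp add: algebra_simps)
qed

lemma padic_sub_class:
  assumes "prime p" "padic_cauchy p X" "padic_cauchy p Y"
  shows "padic_sub p (padic_class p X) (padic_class p Y) = padic_class p (\<lambda>n. X n - Y n)"
  unfolding padic_sub_def
proof (rule padic_class_eq[OF assms(1)])
  let ?X = "padic_rep (padic_class p X)" and ?Y = "padic_rep (padic_class p Y)"
  have "padic_null p (\<lambda>n. (?X n - X n) + - (?Y n - Y n))"
    using assms by (intro padic_null_add padic_null_uminus padic_null_rep_diff)
  thus "padic_null p (\<lambda>n. ?X n - ?Y n - (X n - Y n))"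
    by (simp add: algebra_simps)
qed

lemma padic_mult_class:
  assumes "prime p" "padic_cauchy p X" "padic_cauchy p Y"
  shows "padic_mult p (padic_class p X) (padic_class p Y) = padic_class p (\<lambda>n. X n * Y n)"
  unfolding padic_mult_def
proof (rule padic_class_eq[OF assms(1)])
  let ?X = "padic_rep (padic_class p X)" and ?Y = "padic_rep (padic_class p Y)"
  obtain K1 where "\<And>n. padic_abs_rat p (?X n) \<le> K1"
    using padic_cauchy_bounded[OF assms(1) padic_rep_class(1)[OF assms(2)]] by blast
  moreover obtain K2 where "\<And>n. padic_abs_rat p (Y n) \<le> K2"
    using padic_cauchy_bounded[OF assms(1,3)] by blast
  ultimately have "padic_null p (\<lambda>n. ?X n * (?Y n - Y n) + Y n * (?X n - X n))"
    using assms by (intro padic_null_add padic_null_mult_bounded padic_null_rep_diff)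
  thus "padic_null p (\<lambda>n. ?X n * ?Y n - X n * Y n)"
    by (simp add: algebra_simps)
qed

lemma tendsto_padic_norm_class:
  assumes "prime p" "padic_cauchy p X"
  shows "(\<lambda>n. padic_abs_rat p (X n)) \<longlonglongrightarrow> padic_norm p (padic_class p X)"
proof -
  let ?R = "padic_rep (padic_class p X)"
  have "(\<lambda>n. padic_abs_rat p (?R n)) \<longlonglongrightarrow> padic_norm p (padic_class p X)"
    unfolding padic_norm_def
    using padic_cauchy_convergent_abs[OF assms(1) padic_rep_class(1)[OF assms(2)]]
    by (simp add: convergent_LIMSEQ_iff)
  moreover have "(\<lambda>n. padic_abs_rat p (X n) - padic_abs_rat p (?R n)) \<longlonglongrightarrow> 0"
  proof (rule tendsto_0_le[where K = 1])
    show "(\<lambda>n. padic_abs_rat p (X n - ?R n)) \<longlonglongrightarrow> 0"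
      using padic_rep_class(2)[OF assms(2)] unfolding padic_null_def .
    show "\<forall>\<^sub>F n in sequentially.
            norm (padic_abs_rat p (X n) - padic_abs_rat p (?R n)) \<le> norm (padic_abs_rat p (X n - ?R n)) * 1"
      using padic_abs_rat_diff_abs_le[OF assms(1)] padic_abs_rat_nonneg[of p] by simp
  qed
  ultimately show ?thesis
    using tendsto_add by fastforce
qed

lemma QpE:
  assumes "A \<in> Qp p"
  obtains X where "padic_cauchy p X" "A = padic_class p X"
  using assms unfolding Qp_def by blast

lemma padic_class_in_Qp: "padic_cauchy p X \<Longrightarrow> padic_class p X \<in> Qp p"
  unfolding Qp_def by blast

lemma padic_of_rat_in_Qp: "padic_of_rat p r \<in> Qp p"
  unfolding padic_of_rat_def by (intro padic_class_in_Qp padic_cauchy_const)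

lemma padic_add_in_Qp:
  assumes "prime p" "A \<in> Qp p" "B \<in> Qp p"
  shows "padic_add p A B \<in> Qp p"
  using assms(2,3)
  by (elim QpE) (simp add: padic_add_class[OF assms(1)] padic_class_in_Qp padic_cauchy_add[OF assms(1)])

lemma padic_sub_in_Qp:
  assumes "prime p" "A \<in> Qp p" "B \<in> Qp p"
  shows "padic_sub p A B \<in> Qp p"
  using assms(2,3)
  by (elim QpE) (simp add: padic_sub_class[OF assms(1)] padic_class_in_Qp padic_cauchy_diff[OF assms(1)])

lemma padic_mult_in_Qp:
  assumes "prime p" "A \<in> Qp p" "B \<in> Qp p"
  shows "padic_mult p A B \<in> Qp p"
  using assms(2,3)
  by (elim QpE) (simp add: padic_mult_class[OF assms(1)] padic_class_in_Qp padic_cauchy_mult[OF assms(1)])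

lemma padic_norm_mult:
  assumes "prime p" "A \<in> Qp p" "B \<in> Qp p"
  shows "padic_norm p (padic_mult p A B) = padic_norm p A * padic_norm p B"
proof -
  obtain X Y where X: "padic_cauchy p X" "A = padic_class p X"
    and Y: "padic_cauchy p Y" "B = padic_class p Y"
    using assms(2,3) by (elim QpE)
  have "(\<lambda>n. padic_abs_rat p (X n * Y n)) \<longlonglongrightarrow> padic_norm p A * padic_norm p B"
    unfolding padic_abs_rat_mult[OF assms(1)] X(2) Y(2)
    by (intro tendsto_mult tendsto_padic_norm_class assms(1) X(1) Y(1))
  moreover have "(\<lambda>n. padic_abs_rat p (X n * Y n)) \<longlonglongrightarrow> padic_norm p (padic_mult p A B)"
    unfolding X(2) Y(2) padic_mult_class[OF assms(1) X(1) Y(1)]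
    by (intro tendsto_padic_norm_class padic_cauchy_mult assms(1) X(1) Y(1))
  ultimately show ?thesis by (rule LIMSEQ_unique[symmetric])
qed

lemma padic_norm_add_eq_of_less:
  assumes "prime p" "A \<in> Qp p" "B \<in> Qp p" "padic_norm p B < padic_norm p A"
  shows "padic_norm p (padic_add p A B) = padic_norm p A"
proof -
  obtain X Y where X: "padic_cauchy p X" "A = padic_class p X"
    and Y: "padic_cauchy p Y" "B = padic_class p Y"
    using assms(2,3) by (elim QpE)
  note lim_X = tendsto_padic_norm_class[OF assms(1) X(1), folded X(2)]
  note lim_Y = tendsto_padic_norm_class[OF assms(1) Y(1), folded Y(2)]
  have "(\<lambda>n. padic_abs_rat p (X n) - padic_abs_rat p (Y n)) \<longlonglongrightarrow> padic_norm p A - padic_norm p B"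
    using lim_X lim_Y by (rule tendsto_diff)
  hence "\<forall>\<^sub>F n in sequentially. padic_abs_rat p (X n) - padic_abs_rat p (Y n) > 0"
    using assms(4) by (intro order_tendstoD(1)) auto
  hence "\<forall>\<^sub>F n in sequentially. padic_abs_rat p (X n) = padic_abs_rat p (X n + Y n)"
    by eventually_elim (simp add: padic_abs_rat_add_eq_of_less[OF assms(1)])
  hence "(\<lambda>n. padic_abs_rat p (X n + Y n)) \<longlonglongrightarrow> padic_norm p A"
    using lim_X by (simp only: tendsto_cong)
  moreover have "(\<lambda>n. padic_abs_rat p (X n + Y n)) \<longlonglongrightarrow> padic_norm p (padic_add p A B)"
    unfolding X(2) Y(2) padic_add_class[OF assms(1) X(1) Y(1)]
    by (intro tendsto_padic_norm_class padic_cauchy_add assms(1) X(1) Y(1))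
  ultimately show ?thesis by (rule LIMSEQ_unique[symmetric])
qed

lemma cubic_f_diff_factor:
  assumes "prime p" "a \<in> Qp p" "x0 \<in> Qp p" "x \<in> Qp p"
  defines "h \<equiv> padic_sub p x x0"
  shows "padic_sub p (cubic_f p a x) (cubic_f p a x0)
           = padic_mult p h
               (padic_add p
                 (padic_add p (cubic_f' p a x0)
                   (padic_mult p h (padic_add p (padic_mult p (padic_of_rat p 3) x0) a)))
                 (padic_mult p h h))"
proof -
  obtain A B C where A: "padic_cauchy p A" "a = padic_class p A"
    and B: "padic_cauchy p B" "x0 = padic_class p B" and C: "padic_cauchy p C" "x = padic_class p C"
    using assms(2-4) by (elim QpE)
  note cauchy = padic_cauchy_add[OF assms(1)] padic_cauchy_diff[OF assms(1)]
    padic_cauchy_mult[OF assms(1)] padic_cauchy_const A(1) B(1) C(1)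
  note ops = padic_add_class[OF assms(1)] padic_sub_class[OF assms(1)] padic_mult_class[OF assms(1)]
  show ?thesis
    unfolding h_def cubic_f_def cubic_f'_def padic_of_rat_def A(2) B(2) C(2)
    by (simp add: ops cauchy) (rule arg_cong[where f = "padic_class p"], rule ext, algebra)
qed

theorem lemma4p1:
  fixes p :: nat and a x0 x :: "(nat \<Rightarrow> rat) set"
  assumes "prime p"
    and "a \<in> Qp p" and "x0 \<in> Qp p" and "x \<in> Qp p"
    and "cubic_f p a x0 = x0"
    and "max (padic_norm p (padic_add p (padic_mult p (padic_of_rat p 3) x0) a)
                * padic_norm p (padic_sub p x x0))
             (padic_norm p (padic_sub p x x0) ^ 2)
         < padic_norm p (cubic_f' p a x0)"
  shows "padic_norm p (padic_sub p (cubic_f p a x) (cubic_f p a x0))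
         = padic_norm p (cubic_f' p a x0) * padic_norm p (padic_sub p x x0)"
proof -
  define h where "h = padic_sub p x x0"
  define c where "c = padic_add p (padic_mult p (padic_of_rat p 3) x0) a"
  define d where "d = cubic_f' p a x0"
  define q where "q = padic_add p (padic_add p d (padic_mult p h c)) (padic_mult p h h)"
  note closed = padic_add_in_Qp[OF assms(1)] padic_sub_in_Qp[OF assms(1)]
    padic_mult_in_Qp[OF assms(1)] padic_of_rat_in_Qp assms(2-4)
  have in_Qp: "h \<in> Qp p" "c \<in> Qp p" "d \<in> Qp p" "padic_mult p h c \<in> Qp p"
    "padic_add p d (padic_mult p h c) \<in> Qp p" "padic_mult p h h \<in> Qp p" "q \<in> Qp p"
    unfolding q_def h_def c_def d_def cubic_f'_def by (intro closed)+
  have factor: "padic_sub p (cubic_f p a x) (cubic_f p a x0) = padic_mult p h q"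
    unfolding q_def h_def c_def d_def by (rule cubic_f_diff_factor[OF assms(1-4)])
  have "padic_norm p (padic_mult p h c) < padic_norm p d"
    "padic_norm p (padic_mult p h h) < padic_norm p d"
    using assms(6) in_Qp by (simp_all add: padic_norm_mult[OF assms(1)] power2_eq_square
      h_def [symmetric] c_def [symmetric] d_def [symmetric] mult.commute)
  hence "padic_norm p q = padic_norm p d"
    unfolding q_def using in_Qp by (simp add: padic_norm_add_eq_of_less[OF assms(1)])
  thus ?thesis
    using in_Qp by (simp add: factor padic_norm_mult[OF assms(1)] h_def [symmetric] d_def [symmetric])
qed

end
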